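(* Let $T$ be a prae-dilator and let $(X,\iota_X,L_X)$ be a Bachmann-Howard system for $T$, and let $\vartheta_X:T_X\to\vartheta_T(X)$ be given by $\vartheta_X(\sigma)=\vartheta\sigma$. Then for all $\sigma,\tau\in T_X$: (i) if $\sigma<_{T_X}\tau$ and $[\iota_X]^{<\omega}(\operatorname{supp}^T_X(\sigma))<^{\operatorname{fin}}_{\vartheta_T(X)}\vartheta_X(\tau)$, then $\vartheta_X(\sigma)<_{\vartheta_T(X)}\vartheta_X(\tau)$; (ii) $[\iota_X]^{<\omega}(\operatorname{supp}^T_X(\sigma))<^{\operatorname{fin}}_{\vartheta_T(X)}\vartheta_X(\sigma)$.
   Context: The finite subset functor $[\cdot]^{<\omega}$ sends a set $X$ to the set of its finite subsets and a function $f$ to $[f]^{<\omega}(a)=\{f(x)\mid x\in a\}$; subsets of linear orders are regarded as suborders. A prae-dilator consists of an endofunctor $X\mapsto T_X$ on the category of linear orders (morphisms: order embeddings) and a natural transformation $\operatorname{supp}^T:T\Rightarrow[\cdot]^{<\omega}$ such that for every linear order $X$ and every $\sigma\in T_X$ we have $\sigma\in\operatorname{rng}(T_{\iota_\sigma})$, where $\iota_\sigma:\operatorname{supp}^T_X(\sigma)\hookrightarrow X$ is the inclusion. For a linear order $Z$ and finite $a,b\subseteq Z$ write $a<^{\operatorname{fin}}_Z b$ iff for every $s\in a$ there is $t\in b$ with $s<_Z t$; $\leq^{\operatorname{fin}}_Z$ is defined analogously with $\leq_Z$; singletons $\{s\}$ are written $s$. For a linear order $X$ let $\vartheta_T(X)$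 be the set of formal terms $\vartheta\sigma$ with $\sigma\in T_X$. A Bachmann-Howard system (for $T$) is a triple $(X,\iota_X,L_X)$ with $X$ a linear order, $\iota_X:X\to\vartheta_T(X)$ and $L_X:X\to\omega$ functions, such that $L_{\vartheta_T(X)}\circ\iota_X=L_X$, where $L_{\vartheta_T(X)}(\vartheta\sigma):=\max\{L_X(x)\mid x\in\operatorname{supp}^T_X(\sigma)\}+1$ (maximum of the empty set is $0$). For such a system the linear order $\vartheta\sigma<_{\vartheta_T(X)}\vartheta\tau$ is defined by recursion on $L_{\vartheta_T(X)}(\vartheta\sigma)+L_{\vartheta_T(X)}(\vartheta\tau)$ to hold iff either (a) $\sigma<_{T_X}\tau$ and $[\iota_X]^{<\omega}(\operatorname{supp}^T_X(\sigma))<^{\operatorname{fin}}_{\vartheta_T(X)}\vartheta\tau$, or (b) $\tau<_{T_X}\sigma$ and $\vartheta\sigma\leq^{\operatorname{fin}}_{\vartheta_T(X)}[\iota_X]^{<\omega}(\operatorname{supp}^T_X(\tau))$. *)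

theory Defs
  imports Main
begin

text \<open>Linear orders are represented as reflexive relations r with carrier Field r
  (library notion Linear_order). Objects of the category are the linear orders whose
  carriers are subsets of a fixed type 'a; the values T_X live in a fixed type 'b.\<close>

definition order_emb :: "'a rel \<Rightarrow> 'c rel \<Rightarrow> ('a \<Rightarrow> 'c) \<Rightarrow> bool" where
  "order_emb r s f \<longleftrightarrow> (\<forall>x\<in>Field r. f x \<in> Field s) \<and>
     (\<forall>x\<in>Field r. \<forall>y\<in>Field r. (x, y) \<in> r \<longleftrightarrow> (f x, f y) \<in> s)"

text \<open>A prae-dilator: object part T, morphism part Tm (T applied to the embedding f : r \<rightarrow> s),
  and the support transformation supp.\<close>
definition prae_dilator ::
  "('a rel \<Rightarrow> 'b rel) \<Rightarrow> ('a rel \<Rightarrow> 'a rel \<Rightarrow> ('a \<Rightarrow> 'a) \<Rightarrow> 'b \<Rightarrow> 'b) \<Rightarrow> ('a rel \<Rightarrow> 'b \<Rightarrow> 'a set) \<Rightarrow> bool" where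
  "prae_dilator T Tm supp \<longleftrightarrow>
    (\<forall>r. Linear_order r \<longrightarrow> Linear_order (T r)) \<and>
    (\<forall>r s f. Linear_order r \<and> Linear_order s \<and> order_emb r s f \<longrightarrow> order_emb (T r) (T s) (Tm r s f)) \<and>
    (\<forall>r s f g. Linear_order r \<and> Linear_order s \<and> order_emb r s f \<and> (\<forall>x\<in>Field r. f x = g x)
        \<longrightarrow> (\<forall>\<sigma>\<in>Field (T r). Tm r s f \<sigma> = Tm r s g \<sigma>)) \<and>
    (\<forall>r. Linear_order r \<longrightarrow> (\<forall>\<sigma>\<in>Field (T r). Tm r r id \<sigma> = \<sigma>)) \<and>
    (\<forall>r s t f g. Linear_order r \<and> Linear_order s \<and> Linear_order t \<and> order_emb r s f \<and> order_emb s t g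
        \<longrightarrow> (\<forall>\<sigma>\<in>Field (T r). Tm r t (g \<circ> f) \<sigma> = Tm s t g (Tm r s f \<sigma>))) \<and>
    (\<forall>r. Linear_order r \<longrightarrow> (\<forall>\<sigma>\<in>Field (T r). finite (supp r \<sigma>) \<and> supp r \<sigma> \<subseteq> Field r)) \<and>
    (\<forall>r s f. Linear_order r \<and> Linear_order s \<and> order_emb r s f
        \<longrightarrow> (\<forall>\<sigma>\<in>Field (T r). supp s (Tm r s f \<sigma>) = f ` supp r \<sigma>)) \<and>
    (\<forall>r. Linear_order r \<longrightarrow> (\<forall>\<sigma>\<in>Field (T r).
        \<sigma> \<in> Tm (Restr r (supp r \<sigma>)) r id ` Field (T (Restr r (supp r \<sigma>)))))"

datatype 'b vartheta = Vt 'b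

definition fin_less :: "('c \<Rightarrow> 'c \<Rightarrow> bool) \<Rightarrow> 'c set \<Rightarrow> 'c set \<Rightarrow> bool" where
  "fin_less lt a b \<longleftrightarrow> (\<forall>s\<in>a. \<exists>t\<in>b. lt s t)"

definition fin_le :: "('c \<Rightarrow> 'c \<Rightarrow> bool) \<Rightarrow> 'c set \<Rightarrow> 'c set \<Rightarrow> bool" where
  "fin_le lt a b \<longleftrightarrow> (\<forall>s\<in>a. \<exists>t\<in>b. lt s t \<or> s = t)"

definition Lth :: "('b \<Rightarrow> 'a set) \<Rightarrow> ('a \<Rightarrow> nat) \<Rightarrow> 'b vartheta \<Rightarrow> nat" where
  "Lth S L t = (case t of Vt \<sigma> \<Rightarrow> (if S \<sigma> = {} then 0 else Max (L ` S \<sigma>)) + 1)"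

text \<open>The recursive clauses (a)/(b), unfolded with an explicit recursion depth k.\<close>
primrec th_less_fuel :: "nat \<Rightarrow> 'b rel \<Rightarrow> ('b \<Rightarrow> 'a set) \<Rightarrow> ('a \<Rightarrow> 'b vartheta)
    \<Rightarrow> 'b vartheta \<Rightarrow> 'b vartheta \<Rightarrow> bool" where
  "th_less_fuel 0 TX S \<iota> a b = False"
| "th_less_fuel (Suc k) TX S \<iota> a b = (case (a, b) of (Vt \<sigma>, Vt \<tau>) \<Rightarrow>
      ((\<sigma>, \<tau>) \<in> TX \<and> \<sigma> \<noteq> \<tau> \<and> fin_less (th_less_fuel k TX S \<iota>) (\<iota> ` S \<sigma>) {Vt \<tau>}) \<or>
      ((\<tau>, \<sigma>) \<in> TX \<and> \<tau> \<noteq> \<sigma> \<and> fin_le (th_less_fuel k TX S \<iota>) {Vt \<sigma>} (\<iota> ` S \<tau>)))"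

text \<open>The order on \<vartheta>_T(X): recursion on L(\<vartheta>\<sigma>) + L(\<vartheta>\<tau>) (depth one more than this sum
  suffices for every recursive call in a Bachmann-Howard system).\<close>
definition theta_less :: "'b rel \<Rightarrow> ('b \<Rightarrow> 'a set) \<Rightarrow> ('a \<Rightarrow> 'b vartheta) \<Rightarrow> ('a \<Rightarrow> nat)
    \<Rightarrow> 'b vartheta \<Rightarrow> 'b vartheta \<Rightarrow> bool" where
  "theta_less TX S \<iota> L a b = th_less_fuel (Lth S L a + Lth S L b + 1) TX S \<iota> a b"

definition BH_system :: "('a rel \<Rightarrow> 'b rel) \<Rightarrow> ('a rel \<Rightarrow> 'b \<Rightarrow> 'a set) \<Rightarrow> 'a rel
    \<Rightarrow> ('a \<Rightarrow> 'b vartheta) \<Rightarrow> ('a \<Rightarrow> nat) \<Rightarrow> bool" where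
  "BH_system T supp r \<iota> L \<longleftrightarrow> Linear_order r \<and>
     (\<forall>x\<in>Field r. \<iota> x \<in> Vt ` Field (T r)) \<and>
     (\<forall>x\<in>Field r. Lth (supp r) L (\<iota> x) = L x)"

end

theory Submission
  imports Defs
begin

text \<open>Every \<iota> x with x \<in> supp \<sigma> has a smaller L-value than \<vartheta>\<sigma>. Hence the recursion
  defining the order on \<vartheta>-terms is stable once the recursion depth exceeds the sum of the
  L-values, so the order itself satisfies the clauses (a)/(b); this gives part (i). For
  part (ii) one shows more generally that \<vartheta>\<rho> < \<vartheta>\<sigma> whenever \<vartheta>\<rho> is reached from \<vartheta>\<sigma> by
  repeatedly passing to a term \<iota> x with x in the support, by induction on L(\<vartheta>\<rho>) + L(\<vartheta>\<sigma>):
  if \<sigma> < \<rho> then \<vartheta>\<rho> equals or lies below one of the terms \<iota>[supp \<sigma>], which is clause (b);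
  if \<rho> < \<sigma> then all terms of \<iota>[supp \<rho>] are also reached from \<vartheta>\<sigma>, which is clause (a).\<close>

locale theta_terms =
  fixes TX :: "'b rel" and F :: "'b set" and S :: "'b \<Rightarrow> 'a set"
    and \<iota> :: "'a \<Rightarrow> 'b vartheta" and L :: "'a \<Rightarrow> nat"
  assumes iota_supp_in: "\<sigma> \<in> F \<Longrightarrow> x \<in> S \<sigma> \<Longrightarrow> \<iota> x \<in> Vt ` F"
    and Lth_iota_supp_less: "\<sigma> \<in> F \<Longrightarrow> x \<in> S \<sigma> \<Longrightarrow> Lth S L (\<iota> x) < Lth S L (Vt \<sigma>)"
begin

lemma th_less_fuel_stable:
  assumes "a \<in> Vt ` F" "b \<in> Vt ` F" "Lth S L a + Lth S L b < k" "k \<le> k'"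
  shows "th_less_fuel k TX S \<iota> a b = th_less_fuel k' TX S \<iota> a b"
  using assms
proof (induction k arbitrary: a b k')
  case 0
  then show ?case by simp
next
  case (Suc k)
  obtain \<sigma> \<tau> where \<sigma>: "\<sigma> \<in> F" "a = Vt \<sigma>" and \<tau>: "\<tau> \<in> F" "b = Vt \<tau>"
    using Suc.prems by blast
  obtain k'' where k'': "k' = Suc k''" "k \<le> k''"
    using Suc.prems by (cases k') auto
  have left: "th_less_fuel k TX S \<iota> (\<iota> x) b = th_less_fuel k'' TX S \<iota> (\<iota> x) b" if "x \<in> S \<sigma>" for x
    using Suc.IH[of "\<iota> x" b k''] Suc.prems iota_supp_in[OF \<sigma>(1) that]
      Lth_iota_supp_less[OF \<sigma>(1) that] \<sigma> k'' by simp
  have right: "th_less_fuel k TX S \<iota> a (\<iota> x) = th_less_fuel k'' TX S \<iota> a (\<iota> x)" if "x \<in> S \<tau>" for x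
    using Suc.IH[of a "\<iota> x" k''] Suc.prems iota_supp_in[OF \<tau>(1) that]
      Lth_iota_supp_less[OF \<tau>(1) that] \<tau> k'' by simp
  show ?case
    using left right unfolding \<sigma>(2) \<tau>(2) k''(1) by (simp add: fin_less_def fin_le_def)
qed

lemma theta_less_eq_fuel:
  assumes "a \<in> Vt ` F" "b \<in> Vt ` F" "Lth S L a + Lth S L b < k"
  shows "theta_less TX S \<iota> L a b = th_less_fuel k TX S \<iota> a b"
  unfolding theta_less_def by (rule th_less_fuel_stable) (use assms in auto)

lemma theta_less_Vt:
  assumes "\<sigma> \<in> F" "\<tau> \<in> F"
  shows "theta_less TX S \<iota> L (Vt \<sigma>) (Vt \<tau>) \<longleftrightarrow>
    ((\<sigma>, \<tau>) \<in> TX \<and> \<sigma> \<noteq> \<tau> \<and> fin_less (theta_less TX S \<iota> L) (\<iota> ` S \<sigma>) {Vt \<tau>}) \<or>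
    ((\<tau>, \<sigma>) \<in> TX \<and> \<tau> \<noteq> \<sigma> \<and> fin_le (theta_less TX S \<iota> L) {Vt \<sigma>} (\<iota> ` S \<tau>))"
proof -
  define n where "n = Lth S L (Vt \<sigma>) + Lth S L (Vt \<tau>)"
  have left: "theta_less TX S \<iota> L (\<iota> x) (Vt \<tau>) = th_less_fuel n TX S \<iota> (\<iota> x) (Vt \<tau>)"
    if "x \<in> S \<sigma>" for x
    using iota_supp_in[OF assms(1) that] Lth_iota_supp_less[OF assms(1) that] assms(2)
    unfolding n_def by (intro theta_less_eq_fuel) auto
  have right: "theta_less TX S \<iota> L (Vt \<sigma>) (\<iota> x) = th_less_fuel n TX S \<iota> (Vt \<sigma>) (\<iota> x)"
    if "x \<in> S \<tau>" for x
    using iota_supp_in[OF assms(2) that] Lth_iota_supp_less[OF assms(2) that] assms(1)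
    unfolding n_def by (intro theta_less_eq_fuel) auto
  have "theta_less TX S \<iota> L (Vt \<sigma>) (Vt \<tau>) = th_less_fuel (Suc n) TX S \<iota> (Vt \<sigma>) (Vt \<tau>)"
    unfolding theta_less_def n_def by simp
  then show ?thesis
    using left right by (simp add: fin_less_def fin_le_def)
qed

definition support_term :: "'b vartheta \<Rightarrow> 'b vartheta \<Rightarrow> bool" where
  "support_term a b \<longleftrightarrow> (\<exists>\<sigma>\<in>F. \<exists>x\<in>S \<sigma>. a = \<iota> x \<and> b = Vt \<sigma>)"

lemma support_term_trancl_Lth_less:
  assumes "support_term\<^sup>+\<^sup>+ a b"
  shows "a \<in> Vt ` F \<and> b \<in> Vt ` F \<and> Lth S L a < Lth S L b"
  using assms
  by induction (auto simp: support_term_def dest: iota_supp_in Lth_iota_supp_less)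

end

locale theta_terms_total = theta_terms +
  assumes total: "\<sigma> \<in> F \<Longrightarrow> \<rho> \<in> F \<Longrightarrow> \<sigma> \<noteq> \<rho> \<Longrightarrow> (\<sigma>, \<rho>) \<in> TX \<or> (\<rho>, \<sigma>) \<in> TX"
begin

lemma theta_less_if_support_term_trancl:
  "support_term\<^sup>+\<^sup>+ a b \<Longrightarrow> theta_less TX S \<iota> L a b"
proof (induction "Lth S L a + Lth S L b" arbitrary: a b rule: less_induct)
  case less
  note a_b = support_term_trancl_Lth_less[OF less.prems]
  obtain \<rho> \<sigma> where \<rho>: "\<rho> \<in> F" "a = Vt \<rho>" and \<sigma>: "\<sigma> \<in> F" "b = Vt \<sigma>"
    using a_b by blast
  have "\<rho> \<noteq> \<sigma>"
    using a_b \<rho> \<sigma> by auto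
  then consider "(\<sigma>, \<rho>) \<in> TX" | "(\<rho>, \<sigma>) \<in> TX"
    using total \<rho> \<sigma> by blast
  then show ?case
  proof cases
    case 1
    have "fin_le (theta_less TX S \<iota> L) {a} (\<iota> ` S \<sigma>)"
      using less.prems
    proof cases
      case r_into_trancl
      then show ?thesis
        using \<sigma> by (auto simp: support_term_def fin_le_def)
    next
      case (trancl_into_trancl c)
      then obtain x where x: "x \<in> S \<sigma>" "c = \<iota> x"
        using \<sigma> by (auto simp: support_term_def)
      have "Lth S L a + Lth S L c < Lth S L a + Lth S L b"
        using Lth_iota_supp_less[OF \<sigma>(1) x(1)] x \<sigma> by simp
      then have "theta_less TX S \<iota> L a c"
        using less.hyps trancl_into_trancl(1) by blast
      then show ?thesis
        using x by (auto simp: fin_le_def)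
    qed
    then show ?thesis
      using theta_less_Vt 1 \<open>\<rho> \<noteq> \<sigma>\<close> \<rho> \<sigma> by simp
  next
    case 2
    have "theta_less TX S \<iota> L (\<iota> y) b" if y: "y \<in> S \<rho>" for y
    proof -
      have "support_term (\<iota> y) a"
        using \<rho> y by (auto simp: support_term_def)
      then have "support_term\<^sup>+\<^sup>+ (\<iota> y) b"
        using less.prems by (rule tranclp_into_tranclp2)
      moreover have "Lth S L (\<iota> y) + Lth S L b < Lth S L a + Lth S L b"
        using Lth_iota_supp_less[OF \<rho>(1) y] \<rho> by simp
      ultimately show ?thesis
        using less.hyps by blast
    qed
    then have "fin_less (theta_less TX S \<iota> L) (\<iota> ` S \<rho>) {b}"
      by (auto simp: fin_less_def)
    then show ?thesis
      using theta_less_Vt 2 \<open>\<rho> \<noteq> \<sigma>\<close> \<rho> \<sigma> by simp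
  qed
qed

lemma iota_supp_theta_less:
  assumes "\<sigma> \<in> F"
  shows "fin_less (theta_less TX S \<iota> L) (\<iota> ` S \<sigma>) {Vt \<sigma>}"
proof -
  have "support_term (\<iota> x) (Vt \<sigma>)" if "x \<in> S \<sigma>" for x
    using assms that by (auto simp: support_term_def)
  then show ?thesis
    using theta_less_if_support_term_trancl by (auto simp: fin_less_def)
qed

end

lemma BH_system_theta_terms_total:
  assumes "prae_dilator T Tm supp" and "BH_system T supp r \<iota> L"
  shows "theta_terms_total (T r) (Field (T r)) (supp r) \<iota> L"
proof -
  have r: "Linear_order r"
    using assms(2) by (simp add: BH_system_def)
  moreover have "\<forall>r. Linear_order r \<longrightarrow> Linear_order (T r)"
    using assms(1) unfolding prae_dilator_def by (rule conjunct1)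
  ultimately have T_r: "Linear_order (T r)"
    by blast
  from r have supp: "finite (supp r \<sigma>) \<and> supp r \<sigma> \<subseteq> Field r" if "\<sigma> \<in> Field (T r)" for \<sigma>
    using assms(1) that unfolding prae_dilator_def by blast
  show ?thesis
  proof unfold_locales
    fix \<sigma> x
    assume \<sigma>: "\<sigma> \<in> Field (T r)" and x: "x \<in> supp r \<sigma>"
    then have x_r: "x \<in> Field r"
      using supp by blast
    then show "\<iota> x \<in> Vt ` Field (T r)"
      using assms(2) by (simp add: BH_system_def)
    have "Lth (supp r) L (\<iota> x) = L x"
      using assms(2) x_r by (simp add: BH_system_def)
    also have "\<dots> < Lth (supp r) L (Vt \<sigma>)"
      using supp[OF \<sigma>] x by (auto simp: Lth_def less_Suc_eq_le)
    finally show "Lth (supp r) L (\<iota> x) < Lth (supp r) L (Vt \<sigma>)" .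
  next
    show "(\<sigma>, \<rho>) \<in> T r \<or> (\<rho>, \<sigma>) \<in> T r"
      if "\<sigma> \<in> Field (T r)" "\<rho> \<in> Field (T r)" "\<sigma> \<noteq> \<rho>" for \<sigma> \<rho>
      using T_r that by (auto simp: linear_order_on_def total_on_def)
  qed
qed

theorem proposition3p6:
  fixes T :: "'a rel \<Rightarrow> 'b rel" and Tm :: "'a rel \<Rightarrow> 'a rel \<Rightarrow> ('a \<Rightarrow> 'a) \<Rightarrow> 'b \<Rightarrow> 'b"
    and supp :: "'a rel \<Rightarrow> 'b \<Rightarrow> 'a set" and r :: "'a rel"
    and \<iota> :: "'a \<Rightarrow> 'b vartheta" and L :: "'a \<Rightarrow> nat"
  assumes "prae_dilator T Tm supp"
    and "BH_system T supp r \<iota> L"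
  shows "\<forall>\<sigma>\<in>Field (T r). \<forall>\<tau>\<in>Field (T r).
     (((\<sigma>, \<tau>) \<in> T r \<and> \<sigma> \<noteq> \<tau> \<and> fin_less (theta_less (T r) (supp r) \<iota> L) (\<iota> ` supp r \<sigma>) {Vt \<tau>})
        \<longrightarrow> theta_less (T r) (supp r) \<iota> L (Vt \<sigma>) (Vt \<tau>)) \<and>
     fin_less (theta_less (T r) (supp r) \<iota> L) (\<iota> ` supp r \<sigma>) {Vt \<sigma>}"
proof -
  interpret theta_terms_total "T r" "Field (T r)" "supp r" \<iota> L
    using BH_system_theta_terms_total[OF assms] .
  show ?thesis
    using theta_less_Vt iota_supp_theta_less by blast
qed

end
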